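(* There is an absolute constant $C>0$ such that: if $w\ge0$ on $\mathbb{T}$ with $\|w\|_{BMO}=t$, $\|w^{-1}\|_{BMO}=s$ and $\|w\|_{L^1(\mathbb{T})}=1$, then \[ (2\pi)^2\le \|w^{-1}\|_{L^1(\mathbb{T})}\le C\bigl(1+(1+t)s\bigr). \]
   Context: $L^1$ norms are with respect to $d\theta$ on $\mathbb{T}\cong[-\pi,\pi]$. $\|f\|_{BMO}=\sup_I\frac1{|I|}\int_I|f-\langle f\rangle_I|d\theta$ over subarcs $I$. *)

theory Defs
  imports "HOL-Analysis.Analysis"
begin

text \<open>Functions on the circle are 2pi-periodic functions on the real line.
  A subarc of the circle is represented by a lifted interval [a,b] with
  0 < b - a \<le> 2 pi; arc length is the Lebesgue measure d theta.\<close>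

definition periodic_2pi :: "(real \<Rightarrow> real) \<Rightarrow> bool" where
  "periodic_2pi f \<longleftrightarrow> (\<forall>x. f (x + 2 * pi) = f x)"

definition arc_avg :: "(real \<Rightarrow> real) \<Rightarrow> real \<Rightarrow> real \<Rightarrow> real" where
  "arc_avg f a b = (LBINT x=a..b. f x) / (b - a)"

definition bmo_norm :: "(real \<Rightarrow> real) \<Rightarrow> ereal" where
  "bmo_norm f = (if (\<forall>a b. set_integrable lborel {a..b} f)
     then (SUP I \<in> {(a, b). a < b \<and> b \<le> a + 2 * pi}.
             ereal ((LBINT x=fst I..snd I. \<bar>f x - arc_avg f (fst I) (snd I)\<bar>) / (snd I - fst I)))
     else \<infinity>)"

definition L1_norm_T :: "(real \<Rightarrow> real) \<Rightarrow> real" where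
  "L1_norm_T f = (LBINT x=-pi..pi. \<bar>f x\<bar>)"

end

theory Submission
  imports Defs
begin

text \<open>The lower bound is the pointwise inequality \<open>2 - y \<le> 1 / y\<close>, integrated with \<open>y\<close> a
  multiple of \<open>w\<close>. For the upper bound write \<open>\<langle>g\<rangle>\<close> for the average over \<open>[-pi, pi]\<close>, itself
  an admissible arc. Then \<open>\<langle>w\<rangle>\<langle>w\<^sup>-\<^sup>1\<rangle> = \<langle>w w\<^sup>-\<^sup>1\<rangle> - \<langle>(w - \<langle>w\<rangle>)(w\<^sup>-\<^sup>1 - \<langle>w\<^sup>-\<^sup>1\<rangle>)\<rangle>\<close>, and by
  AM-GM the covariance term is bounded by the \<open>L\<^sup>2\<close> oscillations of \<open>w\<close> and \<open>w\<^sup>-\<^sup>1\<close>. These are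
  controlled by the BMO norms through the \<open>L\<^sup>2\<close> John--Nirenberg inequality
  \<open>\<langle>\<bar>f - \<langle>f\<rangle>\<bar>\<^sup>2\<rangle> \<le> 24 \<parallel>f\<parallel>\<^sup>2\<^sub>B\<^sub>M\<^sub>O\<close>, proved for bounded \<open>f\<close> by a dyadic stopping-time argument whose
  remainder vanishes by the dyadic Lebesgue differentiation theorem. Truncating \<open>w\<close> and \<open>w\<^sup>-\<^sup>1\<close>
  at height \<open>n\<close> at most doubles their BMO norms, and letting \<open>n \<rightarrow> \<infinity>\<close> gives
  \<open>\<langle>w\<rangle>\<langle>w\<^sup>-\<^sup>1\<rangle> \<le> 1 + 96 t s\<close>.\<close>

definition loc_integrable :: "(real \<Rightarrow> real) \<Rightarrow> bool" where
  "loc_integrable g \<longleftrightarrow> (\<forall>u v. set_integrable lborel {u..v} g)"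

definition Icc_integral :: "(real \<Rightarrow> real) \<Rightarrow> real \<Rightarrow> real \<Rightarrow> real" where
  "Icc_integral g u v = (LBINT x:{u..v}. g x)"

lemma loc_integrable_borel_measurable:
  assumes "loc_integrable g" shows "g \<in> borel_measurable borel"
proof -
  have "(\<lambda>x. indicator {-real n..real n} x * g x) \<in> borel_measurable borel" for n
    using assms borel_measurable_integrable
    unfolding loc_integrable_def set_integrable_def by fastforce
  moreover have "(\<lambda>n. indicator {-real n..real n} x * g x) \<longlonglongrightarrow> g x" for x
  proof (rule tendsto_eventually)
    obtain n where "\<bar>x\<bar> \<le> real n" using real_arch_simple by blast
    then show "\<forall>\<^sub>F n in sequentially. indicator {-real n..real n} x * g x = g x"
      unfolding eventually_sequentially by (intro exI[of _ n]) (auto simp: indicator_def)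
  qed
  ultimately show ?thesis by (rule borel_measurable_LIMSEQ_real[rotated])
qed

lemma loc_integrable_bounded:
  assumes "g \<in> borel_measurable borel" "\<And>x. \<bar>g x\<bar> \<le> B" shows "loc_integrable g"
  unfolding loc_integrable_def set_integrable_def
  by (intro allI integrableI_bounded_set_indicator[where B=B]) (auto simp: assms emeasure_lborel_Icc_eq)

lemma loc_integrable_integrable: "integrable lborel g \<Longrightarrow> loc_integrable g"
  unfolding loc_integrable_def set_integrable_def using integrable_mult_indicator[of _ lborel g] by simp

lemma loc_integrable_const [simp, intro!]: "loc_integrable (\<lambda>x. c)"
  by (rule loc_integrable_bounded[where B="\<bar>c\<bar>"]) auto

lemma loc_integrable_add [intro!]: "loc_integrable f \<Longrightarrow> loc_integrable g \<Longrightarrow> loc_integrable (\<lambda>x. f x + g x)"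
  unfolding loc_integrable_def by auto

lemma loc_integrable_diff [intro!]: "loc_integrable f \<Longrightarrow> loc_integrable g \<Longrightarrow> loc_integrable (\<lambda>x. f x - g x)"
  unfolding loc_integrable_def by (blast intro: set_integral_diff(1))

lemma loc_integrable_cmult [intro!]: "loc_integrable f \<Longrightarrow> loc_integrable (\<lambda>x. c * f x)"
  unfolding loc_integrable_def by auto

lemma loc_integrable_abs [intro!]: "loc_integrable f \<Longrightarrow> loc_integrable (\<lambda>x. \<bar>f x\<bar>)"
  unfolding loc_integrable_def by (auto intro: set_integrable_abs)

lemma loc_integrable_min:
  assumes "loc_integrable f" shows "loc_integrable (\<lambda>x. min (f x) c)"
proof -
  have "(\<lambda>x. min (f x) c) = (\<lambda>x. (1 / 2) * (f x + c - \<bar>f x - c\<bar>))"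
    by (auto simp: min_def fun_eq_iff)
  then show ?thesis
    by (simp only:) (intro loc_integrable_cmult loc_integrable_diff loc_integrable_add
        loc_integrable_abs loc_integrable_const assms)
qed

lemma loc_integrable_indicator [intro!]: "A \<in> sets borel \<Longrightarrow> loc_integrable (indicator A)"
  by (rule loc_integrable_bounded[where B=1]) (auto simp: indicator_def)

lemma Icc_integral_add:
  "loc_integrable f \<Longrightarrow> loc_integrable g \<Longrightarrow> Icc_integral (\<lambda>x. f x + g x) u v = Icc_integral f u v + Icc_integral g u v"
  unfolding loc_integrable_def Icc_integral_def by auto

lemma Icc_integral_diff:
  "loc_integrable f \<Longrightarrow> loc_integrable g \<Longrightarrow> Icc_integral (\<lambda>x. f x - g x) u v = Icc_integral f u v - Icc_integral g u v"
  unfolding loc_integrable_def Icc_integral_def by auto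

lemma Icc_integral_cmult: "Icc_integral (\<lambda>x. c * f x) u v = c * Icc_integral f u v"
  unfolding Icc_integral_def by auto

lemma Icc_integral_const: "u \<le> v \<Longrightarrow> Icc_integral (\<lambda>x. c) u v = c * (v - u)"
  unfolding Icc_integral_def by (subst set_integral_const) auto

lemma Icc_integral_mono:
  "loc_integrable f \<Longrightarrow> loc_integrable g \<Longrightarrow> (\<And>x. u \<le> x \<Longrightarrow> x \<le> v \<Longrightarrow> f x \<le> g x)
    \<Longrightarrow> Icc_integral f u v \<le> Icc_integral g u v"
  unfolding loc_integrable_def Icc_integral_def by (rule set_integral_mono) auto

lemma Icc_integral_nonneg:
  "loc_integrable f \<Longrightarrow> (\<And>x. u \<le> x \<Longrightarrow> x \<le> v \<Longrightarrow> 0 \<le> f x) \<Longrightarrow> 0 \<le> Icc_integral f u v"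
  using Icc_integral_mono[of "\<lambda>x. 0" f u v] loc_integrable_const by (simp add: Icc_integral_def)

lemma Icc_integral_abs_le: "loc_integrable f \<Longrightarrow> \<bar>Icc_integral f u v\<bar> \<le> Icc_integral (\<lambda>x. \<bar>f x\<bar>) u v"
  unfolding loc_integrable_def Icc_integral_def using set_integral_norm_bound by fastforce

lemma Icc_integral_split:
  assumes "loc_integrable g" "u \<le> m" "m \<le> v"
  shows "Icc_integral g u v = Icc_integral g u m + Icc_integral g m v"
proof -
  have "{u..v} = {u..m} \<union> {m..v}" using assms by auto
  moreover have "(LBINT x:{u..m} \<union> {m..v}. g x) = (LBINT x:{u..m}. g x) + (LBINT x:{m..v}. g x)"
    by (rule set_integral_Un_AE) (use assms AE_lborel_singleton[of m] in \<open>auto simp: loc_integrable_def\<close>)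
  ultimately show ?thesis unfolding Icc_integral_def by simp
qed

lemma Icc_integral_cong:
  "(\<And>x. u \<le> x \<Longrightarrow> x \<le> v \<Longrightarrow> f x = g x) \<Longrightarrow> Icc_integral f u v = Icc_integral g u v"
  unfolding Icc_integral_def by (rule set_lebesgue_integral_cong) auto

lemma Icc_integral_tendsto_zero:
  assumes "\<And>i. g i \<in> borel_measurable borel" "\<And>x. (\<lambda>i. g i x) \<longlonglongrightarrow> 0"
    and "\<And>i x. \<bar>g i x\<bar> \<le> W x" "loc_integrable W"
  shows "(\<lambda>i. Icc_integral (g i) u v) \<longlonglongrightarrow> 0"
proof -
  have W: "integrable lborel (\<lambda>x. indicator {u..v} x *\<^sub>R W x)"
    using assms(4) unfolding loc_integrable_def set_integrable_def by blast
  have lim: "AE x in lborel. (\<lambda>i. indicator {u..v} x *\<^sub>R g i x) \<longlonglongrightarrow> 0"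
    using assms(2) by (auto simp: indicator_def)
  have bound: "AE x in lborel. norm (indicator {u..v} x *\<^sub>R g i x) \<le> indicator {u..v} x *\<^sub>R W x" for i
    using assms(3)[of i] by (auto simp: indicator_def)
  have "(\<lambda>i. LINT x|lborel. indicator {u..v} x *\<^sub>R g i x) \<longlonglongrightarrow> (LINT x::real|lborel. 0::real)"
    by (rule integral_dominated_convergence[OF _ _ W lim bound]) (use assms(1) in simp_all)
  then show ?thesis unfolding Icc_integral_def set_lebesgue_integral_def by simp
qed

lemma arc_avg_eq: "u \<le> v \<Longrightarrow> arc_avg f u v = Icc_integral f u v / (v - u)"
  unfolding arc_avg_def Icc_integral_def by (simp add: interval_integral_Icc)

lemma Icc_integral_eq_arc_avg: "u < v \<Longrightarrow> Icc_integral f u v = (v - u) * arc_avg f u v"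
  by (simp add: arc_avg_eq)

lemma arc_avg_const: "u < v \<Longrightarrow> arc_avg (\<lambda>x. c) u v = c"
  by (simp add: arc_avg_eq Icc_integral_const)

lemma arc_avg_add:
  "loc_integrable f \<Longrightarrow> loc_integrable g \<Longrightarrow> u \<le> v \<Longrightarrow> arc_avg (\<lambda>x. f x + g x) u v = arc_avg f u v + arc_avg g u v"
  by (simp add: arc_avg_eq Icc_integral_add add_divide_distrib)

lemma arc_avg_diff:
  "loc_integrable f \<Longrightarrow> loc_integrable g \<Longrightarrow> u \<le> v \<Longrightarrow> arc_avg (\<lambda>x. f x - g x) u v = arc_avg f u v - arc_avg g u v"
  by (simp add: arc_avg_eq Icc_integral_diff diff_divide_distrib)

lemma arc_avg_cmult: "u \<le> v \<Longrightarrow> arc_avg (\<lambda>x. c * f x) u v = c * arc_avg f u v"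
  by (simp add: arc_avg_eq Icc_integral_cmult)

lemma arc_avg_le:
  assumes "loc_integrable f" "u < v" "\<And>x. u \<le> x \<Longrightarrow> x \<le> v \<Longrightarrow> f x \<le> M"
  shows "arc_avg f u v \<le> M"
  using Icc_integral_mono[of f "\<lambda>x. M" u v] assms
  by (simp add: arc_avg_eq Icc_integral_const divide_le_eq)

lemma arc_avg_ge:
  assumes "loc_integrable f" "u < v" "\<And>x. u \<le> x \<Longrightarrow> x \<le> v \<Longrightarrow> M \<le> f x"
  shows "M \<le> arc_avg f u v"
  using Icc_integral_mono[of "\<lambda>x. M" f u v] assms
  by (simp add: arc_avg_eq Icc_integral_const le_divide_eq)

lemma abs_arc_avg_diff_le:
  assumes "loc_integrable f" "u < v"
  shows "(v - u) * \<bar>arc_avg f u v - c\<bar> \<le> Icc_integral (\<lambda>x. \<bar>f x - c\<bar>) u v"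
proof -
  have "(v - u) * \<bar>arc_avg f u v - c\<bar> = \<bar>Icc_integral (\<lambda>x. f x - c) u v\<bar>"
    using assms by (simp add: arc_avg_diff arc_avg_const Icc_integral_eq_arc_avg abs_mult)
  also have "\<dots> \<le> Icc_integral (\<lambda>x. \<bar>f x - c\<bar>) u v"
    using assms by (intro Icc_integral_abs_le) auto
  finally show ?thesis .
qed

definition osc_integral :: "(real \<Rightarrow> real) \<Rightarrow> real \<Rightarrow> real \<Rightarrow> real" where
  "osc_integral f u v = Icc_integral (\<lambda>x. \<bar>f x - arc_avg f u v\<bar>) u v"

fun dyadic_sum :: "(real \<Rightarrow> real \<Rightarrow> real) \<Rightarrow> nat \<Rightarrow> real \<Rightarrow> real \<Rightarrow> real" where
  "dyadic_sum q 0 u v = q u v"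
| "dyadic_sum q (Suc h) u v = dyadic_sum q h u ((u+v)/2) + dyadic_sum q h ((u+v)/2) v"

lemma dyadic_sum_mono:
  assumes "\<And>u' v'. u \<le> u' \<Longrightarrow> u' < v' \<Longrightarrow> v' \<le> v \<Longrightarrow> q u' v' \<le> p u' v'" "u < v"
  shows "dyadic_sum q h u v \<le> dyadic_sum p h u v"
  using assms
proof (induction h arbitrary: u v)
  case (Suc h)
  have "dyadic_sum q h u ((u+v)/2) \<le> dyadic_sum p h u ((u+v)/2)"
    by (rule Suc.IH) (use Suc.prems in auto)
  moreover have "dyadic_sum q h ((u+v)/2) v \<le> dyadic_sum p h ((u+v)/2) v"
    by (rule Suc.IH) (use Suc.prems in auto)
  ultimately show ?case by simp
qed simp

lemma dyadic_sum_cong: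
  assumes "\<And>u' v'. u \<le> u' \<Longrightarrow> u' < v' \<Longrightarrow> v' \<le> v \<Longrightarrow> q u' v' = p u' v'" "u < v"
  shows "dyadic_sum q h u v = dyadic_sum p h u v"
  using dyadic_sum_mono[of u v q p h] dyadic_sum_mono[of u v p q h] assms by force

lemma dyadic_sum_nonneg:
  "(\<And>u' v'. u' < v' \<Longrightarrow> 0 \<le> q u' v') \<Longrightarrow> u < v \<Longrightarrow> 0 \<le> dyadic_sum q h u v"
  by (induction h arbitrary: u v) (simp_all add: add_nonneg_nonneg)

lemma dyadic_sum_add:
  "dyadic_sum (\<lambda>u v. q u v + p u v) h u v = dyadic_sum q h u v + dyadic_sum p h u v"
  by (induction h arbitrary: u v) simp_all

lemma dyadic_sum_cmult: "dyadic_sum (\<lambda>u v. c * q u v) h u v = c * dyadic_sum q h u v"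
  by (induction h arbitrary: u v) (simp_all add: distrib_left)

lemma dyadic_sum_additive:
  assumes "\<And>u m v. u \<le> m \<Longrightarrow> m \<le> v \<Longrightarrow> q u v = q u m + q m v" "u \<le> v"
  shows "dyadic_sum q h u v = q u v"
  using assms(2) by (induction h arbitrary: u v) (simp_all add: assms(1)[symmetric])

lemma dyadic_sum_Icc_integral:
  "loc_integrable g \<Longrightarrow> u \<le> v \<Longrightarrow> dyadic_sum (Icc_integral g) h u v = Icc_integral g u v"
  by (rule dyadic_sum_additive) (auto intro: Icc_integral_split)

lemma osc_integral_nonneg: "loc_integrable f \<Longrightarrow> 0 \<le> osc_integral f u v"
  unfolding osc_integral_def by (rule Icc_integral_nonneg) auto

lemma osc_integral_const: "u < v \<Longrightarrow> osc_integral (\<lambda>x. c) u v = 0"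
  by (simp add: osc_integral_def arc_avg_const Icc_integral_const)

lemma osc_integral_cmult:
  assumes "u \<le> v" shows "osc_integral (\<lambda>x. c * f x) u v = \<bar>c\<bar> * osc_integral f u v"
proof -
  have "\<bar>c * f x - c * arc_avg f u v\<bar> = \<bar>c\<bar> * \<bar>f x - arc_avg f u v\<bar>" for x
    by (simp add: abs_mult flip: right_diff_distrib)
  then show ?thesis using assms by (simp add: osc_integral_def arc_avg_cmult Icc_integral_cmult)
qed

lemma osc_integral_add_le:
  assumes "loc_integrable f" "loc_integrable g" "u < v"
  shows "osc_integral (\<lambda>x. f x + g x) u v \<le> osc_integral f u v + osc_integral g u v"
proof -
  have "osc_integral (\<lambda>x. f x + g x) u v
      \<le> Icc_integral (\<lambda>x. \<bar>f x - arc_avg f u v\<bar> + \<bar>g x - arc_avg g u v\<bar>) u v"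
    unfolding osc_integral_def arc_avg_add[OF assms(1,2) less_imp_le[OF assms(3)]]
    by (rule Icc_integral_mono) (use assms in auto)
  also have "\<dots> = osc_integral f u v + osc_integral g u v"
    unfolding osc_integral_def by (rule Icc_integral_add) (use assms in auto)
  finally show ?thesis .
qed

lemma osc_integral_le_approx:
  assumes "loc_integrable f" "loc_integrable g" "u < v"
  shows "osc_integral f u v \<le> osc_integral g u v + 2 * Icc_integral (\<lambda>x. \<bar>f x - g x\<bar>) u v"
proof -
  let ?d = "\<bar>arc_avg f u v - arc_avg g u v\<bar>"
  have "(v - u) * ?d \<le> Icc_integral (\<lambda>x. \<bar>f x - g x - 0\<bar>) u v"
    using abs_arc_avg_diff_le[of "\<lambda>x. f x - g x" u v 0] assms by (auto simp: arc_avg_diff)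
  moreover have "osc_integral f u v
      \<le> Icc_integral (\<lambda>x. \<bar>g x - arc_avg g u v\<bar> + (\<bar>f x - g x\<bar> + ?d)) u v"
    unfolding osc_integral_def by (rule Icc_integral_mono) (use assms in auto)
  moreover have "\<dots> = osc_integral g u v + Icc_integral (\<lambda>x. \<bar>f x - g x\<bar>) u v + (v - u) * ?d"
    unfolding osc_integral_def using assms
    by (simp add: Icc_integral_add Icc_integral_const loc_integrable_add loc_integrable_abs
        loc_integrable_diff algebra_simps)
  ultimately show ?thesis by simp
qed

lemma osc_integral_antimono:
  assumes "loc_integrable \<phi>" "\<And>x y. x \<le> y \<Longrightarrow> \<phi> y \<le> \<phi> x" "u < v"
  shows "osc_integral \<phi> u v \<le> (v - u) * (\<phi> u - \<phi> v)"
proof -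
  have avg: "\<phi> v \<le> arc_avg \<phi> u v" "arc_avg \<phi> u v \<le> \<phi> u"
    by (auto intro!: arc_avg_ge arc_avg_le assms)
  have "\<bar>\<phi> x - arc_avg \<phi> u v\<bar> \<le> \<phi> u - \<phi> v" if "u \<le> x" "x \<le> v" for x
    using assms(2)[OF that(1)] assms(2)[OF that(2)] avg by linarith
  then have "osc_integral \<phi> u v \<le> Icc_integral (\<lambda>x. \<phi> u - \<phi> v) u v"
    unfolding osc_integral_def by (intro Icc_integral_mono) (use assms in auto)
  then show ?thesis using assms(3) by (simp add: Icc_integral_const mult.commute)
qed

lemma osc_integral_cong:
  assumes "\<And>x. u \<le> x \<Longrightarrow> x \<le> v \<Longrightarrow> f x = g x" "u \<le> v"
  shows "osc_integral f u v = osc_integral g u v"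
proof -
  have "arc_avg f u v = arc_avg g u v"
    using Icc_integral_cong[OF assms(1)] assms(2) by (simp add: arc_avg_eq)
  then show ?thesis unfolding osc_integral_def by (intro Icc_integral_cong) (simp add: assms)
qed

lemma osc_integral_le_const:
  assumes "loc_integrable g" "u < v"
  shows "osc_integral g u v \<le> 2 * Icc_integral (\<lambda>x. \<bar>g x - c\<bar>) u v"
  using osc_integral_le_approx[OF assms(1) loc_integrable_const assms(2), of c] assms(2)
  by (simp add: osc_integral_const)

lemma osc_integral_lipschitz_comp_le:
  assumes "loc_integrable f" "loc_integrable (\<lambda>x. \<phi> (f x))" "\<And>x y. \<bar>\<phi> x - \<phi> y\<bar> \<le> \<bar>x - y\<bar>" "u < v"
  shows "osc_integral (\<lambda>x. \<phi> (f x)) u v \<le> 2 * osc_integral f u v"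
proof -
  have "osc_integral (\<lambda>x. \<phi> (f x)) u v \<le> 2 * Icc_integral (\<lambda>x. \<bar>\<phi> (f x) - \<phi> (arc_avg f u v)\<bar>) u v"
    by (rule osc_integral_le_const[OF assms(2,4)])
  also have "\<dots> \<le> 2 * osc_integral f u v"
    unfolding osc_integral_def using assms(1,2) by (auto intro!: Icc_integral_mono assms(3))
  finally show ?thesis .
qed

section \<open>Dyadic Lebesgue differentiation\<close>

definition dyadic_osc_vanishes :: "(real \<Rightarrow> real) \<Rightarrow> real \<Rightarrow> real \<Rightarrow> bool" where
  "dyadic_osc_vanishes f u v \<longleftrightarrow> (\<lambda>h. dyadic_sum (osc_integral f) h u v) \<longlonglongrightarrow> 0"

lemma dyadic_osc_vanishes_const: "u < v \<Longrightarrow> dyadic_osc_vanishes (\<lambda>x. c) u v"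
  unfolding dyadic_osc_vanishes_def
  using dyadic_sum_cong[of u v "osc_integral (\<lambda>x. c)" "\<lambda>_ _. 0"] dyadic_sum_cmult[of 0]
  by (simp add: osc_integral_const)

lemma dyadic_osc_vanishes_cmult:
  assumes "u < v" "dyadic_osc_vanishes f u v"
  shows "dyadic_osc_vanishes (\<lambda>x. c * f x) u v"
proof -
  have "dyadic_sum (osc_integral (\<lambda>x. c * f x)) h u v = \<bar>c\<bar> * dyadic_sum (osc_integral f) h u v" for h
    using dyadic_sum_cong[of u v _ "\<lambda>u v. \<bar>c\<bar> * osc_integral f u v"] assms(1)
    by (simp add: osc_integral_cmult dyadic_sum_cmult)
  then show ?thesis
    using tendsto_mult_right_zero[of _ sequentially "\<bar>c\<bar>"] assms(2)
    by (simp add: dyadic_osc_vanishes_def)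
qed

lemma dyadic_osc_vanishes_add:
  assumes "loc_integrable f" "loc_integrable g" "u < v"
    and "dyadic_osc_vanishes f u v" "dyadic_osc_vanishes g u v"
  shows "dyadic_osc_vanishes (\<lambda>x. f x + g x) u v"
  unfolding dyadic_osc_vanishes_def
proof (rule tendsto_sandwich[OF always_eventually always_eventually tendsto_const])
  show "\<forall>h. 0 \<le> dyadic_sum (osc_integral (\<lambda>x. f x + g x)) h u v"
    using assms by (auto intro!: dyadic_sum_nonneg osc_integral_nonneg)
  show "\<forall>h. dyadic_sum (osc_integral (\<lambda>x. f x + g x)) h u v
      \<le> dyadic_sum (osc_integral f) h u v + dyadic_sum (osc_integral g) h u v"
    using assms(1-3) by (auto simp flip: dyadic_sum_add intro!: dyadic_sum_mono osc_integral_add_le)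
  show "(\<lambda>h. dyadic_sum (osc_integral f) h u v + dyadic_sum (osc_integral g) h u v) \<longlonglongrightarrow> 0"
    using assms(4,5) tendsto_add_zero unfolding dyadic_osc_vanishes_def by blast
qed

lemma dyadic_osc_vanishes_approx:
  assumes "loc_integrable f" "u < v"
    and approx: "\<And>e. e > 0 \<Longrightarrow> \<exists>g. loc_integrable g \<and> dyadic_osc_vanishes g u v
        \<and> Icc_integral (\<lambda>x. \<bar>f x - g x\<bar>) u v < e"
  shows "dyadic_osc_vanishes f u v"
  unfolding dyadic_osc_vanishes_def
proof (rule LIMSEQ_I)
  fix e :: real assume "e > 0"
  then obtain g where g: "loc_integrable g" "dyadic_osc_vanishes g u v"
    and fg: "Icc_integral (\<lambda>x. \<bar>f x - g x\<bar>) u v < e/4"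
    using approx[of "e/4"] by auto
  obtain H where H: "\<And>h. h \<ge> H \<Longrightarrow> \<bar>dyadic_sum (osc_integral g) h u v\<bar> < e/2"
    using LIMSEQ_D[OF g(2)[unfolded dyadic_osc_vanishes_def], of "e/2"] \<open>e > 0\<close> by auto
  have "norm (dyadic_sum (osc_integral f) h u v - 0) < e" if "h \<ge> H" for h
  proof -
    have "dyadic_sum (osc_integral f) h u v
        \<le> dyadic_sum (\<lambda>u v. osc_integral g u v + 2 * Icc_integral (\<lambda>x. \<bar>f x - g x\<bar>) u v) h u v"
      using assms(1,2) g(1) by (intro dyadic_sum_mono osc_integral_le_approx) auto
    also have "\<dots> = dyadic_sum (osc_integral g) h u v + 2 * Icc_integral (\<lambda>x. \<bar>f x - g x\<bar>) u v"
      using assms(1,2) g(1) by (simp add: dyadic_sum_add dyadic_sum_cmult dyadic_sum_Icc_integral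
          loc_integrable_abs loc_integrable_diff)
    finally show ?thesis
      using H[OF that] fg dyadic_sum_nonneg[OF osc_integral_nonneg[OF assms(1)] assms(2)] by simp
  qed
  then show "\<exists>H. \<forall>h\<ge>H. norm (dyadic_sum (osc_integral f) h u v - 0) < e" by blast
qed

lemma dyadic_osc_vanishes_limit:
  assumes "\<And>i. loc_integrable (s i)" "\<And>i. dyadic_osc_vanishes (s i) u v"
    and "\<And>x. (\<lambda>i. s i x) \<longlonglongrightarrow> f x" "\<And>i x. \<bar>s i x\<bar> \<le> W x" "\<And>x. \<bar>f x\<bar> \<le> W x"
    and "loc_integrable W" "loc_integrable f" "u < v"
  shows "dyadic_osc_vanishes f u v"
proof (rule dyadic_osc_vanishes_approx[OF assms(7,8)])
  fix e :: real assume "e > 0"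
  have "(\<lambda>i. Icc_integral (\<lambda>x. \<bar>f x - s i x\<bar>) u v) \<longlonglongrightarrow> 0"
  proof (rule Icc_integral_tendsto_zero[where W="\<lambda>x. 2 * W x"])
    show "(\<lambda>x. \<bar>f x - s i x\<bar>) \<in> borel_measurable borel" for i
      using assms(1,7) by (intro loc_integrable_borel_measurable) auto
    show "(\<lambda>i. \<bar>f x - s i x\<bar>) \<longlonglongrightarrow> 0" for x
      using tendsto_diff[OF tendsto_const assms(3), of "f x" x] by (simp add: tendsto_rabs_zero_iff)
    show "\<bar>\<bar>f x - s i x\<bar>\<bar> \<le> 2 * W x" for i x
      using assms(4)[of i x] assms(5)[of x] by linarith
  qed (use assms(6) in auto)
  from LIMSEQ_D[OF this \<open>e > 0\<close>] obtain i where "Icc_integral (\<lambda>x. \<bar>f x - s i x\<bar>) u v < e"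
    by (metis abs_less_iff diff_zero order_refl real_norm_def)
  then show "\<exists>g. loc_integrable g \<and> dyadic_osc_vanishes g u v \<and> Icc_integral (\<lambda>x. \<bar>f x - g x\<bar>) u v < e"
    using assms(1,2) by blast
qed

lemma dyadic_osc_vanishes_antimono:
  assumes "loc_integrable \<phi>" "\<And>x y. x \<le> y \<Longrightarrow> \<phi> y \<le> \<phi> x" "u < v"
  shows "dyadic_osc_vanishes \<phi> u v"
proof -
  have le: "dyadic_sum (osc_integral \<phi>) h p q \<le> (q - p) * (\<phi> p - \<phi> q) / 2^h" if "p < q" for h p q
    using that
  proof (induction h arbitrary: p q)
    case 0
    then show ?case using osc_integral_antimono[OF assms(1,2)] by simp
  next
    case (Suc h)
    let ?m = "(p + q) / 2"
    have "dyadic_sum (osc_integral \<phi>) (Suc h) p q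
        \<le> (?m - p) * (\<phi> p - \<phi> ?m) / 2^h + (q - ?m) * (\<phi> ?m - \<phi> q) / 2^h"
      using Suc.IH[of p ?m] Suc.IH[of ?m q] Suc.prems by simp
    also have "\<dots> = (q - p) * (\<phi> p - \<phi> q) / 2^Suc h"
      by (simp add: field_simps)
    finally show ?case .
  qed
  show ?thesis
    unfolding dyadic_osc_vanishes_def
    by (rule tendsto_sandwich[OF always_eventually always_eventually tendsto_const
          LIMSEQ_divide_realpow_zero[of 2 "(v - u) * (\<phi> u - \<phi> v)"]])
      (use le assms(3) dyadic_sum_nonneg osc_integral_nonneg[OF assms(1)] in auto)
qed

lemma dyadic_osc_vanishes_indicator:
  assumes "A \<in> sets borel" "u < v"
  shows "dyadic_osc_vanishes (indicator A) u v"
  using assms(1)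
proof (induction rule: borel_set_induct)
  case empty
  have "(indicator {} :: real \<Rightarrow> real) = (\<lambda>x. 0)" by auto
  then show ?case using dyadic_osc_vanishes_const[OF assms(2)] by simp
next
  case (interval p q)
  have eq: "(indicator {p..q} :: real \<Rightarrow> real) = (\<lambda>x. indicator {..q} x + (-1) * indicator {..<p} x)"
    using interval by (auto simp: indicator_def fun_eq_iff)
  have "dyadic_osc_vanishes (indicator {..q}) u v" "dyadic_osc_vanishes (indicator {..<p}) u v"
    by (auto intro!: dyadic_osc_vanishes_antimono assms(2) simp: indicator_def)
  then show ?case
    unfolding eq by (intro dyadic_osc_vanishes_add dyadic_osc_vanishes_cmult loc_integrable_cmult
        loc_integrable_indicator assms(2)) auto
next
  case (compl A)
  have eq: "(indicator (-A) :: real \<Rightarrow> real) = (\<lambda>x. 1 + (-1) * indicator A x)"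
    by (auto simp: indicator_def fun_eq_iff)
  show ?case
    unfolding eq by (intro dyadic_osc_vanishes_add dyadic_osc_vanishes_cmult dyadic_osc_vanishes_const
        loc_integrable_const loc_integrable_cmult loc_integrable_indicator compl assms(2))
next
  case (union F)
  let ?S = "\<lambda>k x. (\<Sum>i<k. indicator (F i) x) :: real"
  have sums: "(\<lambda>i. indicator (F i) x :: real) sums indicator (\<Union>i. F i) x" for x
    using union(1) by (intro indicator_sums) (auto simp: disjoint_family_on_def)
  have S_bound: "\<bar>?S k x\<bar> \<le> 1" for k x
  proof -
    have "?S k x \<le> (\<Sum>i. indicator (F i) x)"
      by (rule sum_le_suminf) (use sums in \<open>auto intro: sums_summable\<close>)
    also have "\<dots> \<le> 1"
      unfolding sums_unique[OF sums, of x, symmetric] by (simp add: indicator_def)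
    finally show ?thesis by (simp add: sum_nonneg)
  qed
  have S_loc: "loc_integrable (?S k)" for k
    using union(2) by (intro loc_integrable_bounded[OF _ S_bound] borel_measurable_sum) auto
  have S_vanishes: "dyadic_osc_vanishes (?S k) u v" for k
  proof (induction k)
    case 0
    then show ?case using dyadic_osc_vanishes_const[OF assms(2), of 0] by simp
  next
    case (Suc k)
    then show ?case
      using dyadic_osc_vanishes_add[OF S_loc loc_integrable_indicator[OF union(2)] assms(2) Suc union(3)]
      by simp
  qed
  show ?case
  proof (rule dyadic_osc_vanishes_limit[where s="?S" and W="\<lambda>x. 1"])
    show "(\<lambda>k. ?S k x) \<longlonglongrightarrow> indicator (\<Union>i. F i) x" for x
      using sums[of x] unfolding sums_def .
    show "\<bar>indicator (\<Union>i. F i) x\<bar> \<le> (1::real)" for x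
      by (simp add: indicator_def)
    show "loc_integrable (indicator (\<Union>i. F i))"
      using union(2) by (intro loc_integrable_indicator) auto
  qed (use S_bound S_loc S_vanishes assms(2) in auto)
qed

lemma dyadic_osc_vanishes_integrable:
  assumes "integrable lborel g" "u < v"
  shows "dyadic_osc_vanishes g u v"
  using assms(1)
proof (induction rule: integrable_induct)
  case (base A c)
  then show ?case
    using dyadic_osc_vanishes_cmult[OF assms(2) dyadic_osc_vanishes_indicator[OF _ assms(2)], of A c]
    by (simp add: mult.commute)
next
  case (add f g)
  then show ?case by (intro dyadic_osc_vanishes_add loc_integrable_integrable assms(2))
next
  case (lim f s)
  show ?case
    by (rule dyadic_osc_vanishes_limit[where s=s and W="\<lambda>x. 2 * \<bar>f x\<bar>"])
      (use lim assms(2) in \<open>auto intro: loc_integrable_integrable\<close>)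
qed

lemma dyadic_osc_vanishes_loc_integrable:
  assumes "loc_integrable f" "u < v"
  shows "dyadic_osc_vanishes f u v"
proof -
  let ?g = "\<lambda>x. indicator {u..v} x * f x"
  have "integrable lborel ?g"
    using assms(1) unfolding loc_integrable_def set_integrable_def by simp
  then have "dyadic_osc_vanishes ?g u v"
    using assms(2) by (rule dyadic_osc_vanishes_integrable)
  moreover have "dyadic_sum (osc_integral ?g) h u v = dyadic_sum (osc_integral f) h u v" for h
    by (rule dyadic_sum_cong) (auto intro!: osc_integral_cong assms(2))
  ultimately show ?thesis unfolding dyadic_osc_vanishes_def by simp
qed

section \<open>An \<open>L\<^sup>2\<close> John--Nirenberg inequality\<close>

definition sq_osc_integral :: "(real \<Rightarrow> real) \<Rightarrow> real \<Rightarrow> real \<Rightarrow> real" where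
  "sq_osc_integral f u v = Icc_integral (\<lambda>x. (f x - arc_avg f u v)\<^sup>2) u v"

definition sq_avg_dev :: "(real \<Rightarrow> real) \<Rightarrow> real \<Rightarrow> real \<Rightarrow> real \<Rightarrow> real" where
  "sq_avg_dev f c u v = (v - u) * (arc_avg f u v - c)\<^sup>2"

lemma sq_avg_dev_le:
  assumes "loc_integrable f" "u < v" "Icc_integral (\<lambda>x. \<bar>f x - c\<bar>) u v \<le> K * (v - u)"
  shows "sq_avg_dev f c u v \<le> K\<^sup>2 * (v - u)"
proof -
  have "(v - u) * \<bar>arc_avg f u v - c\<bar> \<le> (v - u) * K"
    using abs_arc_avg_diff_le[OF assms(1,2), of c] assms(3) by (simp add: mult.commute)
  then have "\<bar>arc_avg f u v - c\<bar> \<le> K" using assms(2) by simp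
  then have "\<bar>arc_avg f u v - c\<bar>\<^sup>2 \<le> K\<^sup>2" by (rule power_mono) simp
  then show ?thesis using assms(2) by (simp add: sq_avg_dev_def mult.commute)
qed

text \<open>The difference of the two integrands is additive over subintervals, so its dyadic sum
  collapses to its value on \<open>[u, v]\<close>.\<close>

lemma dyadic_sum_sq_avg_dev_shift:
  assumes "loc_integrable f" "u < v"
  shows "dyadic_sum (sq_avg_dev f c) h u v
    = dyadic_sum (sq_avg_dev f (arc_avg f u v)) h u v + sq_avg_dev f c u v"
proof -
  let ?a = "arc_avg f u v"
  let ?r = "\<lambda>p q. (?a - c) * (2 * Icc_integral f p q - (?a + c) * (q - p))"
  have "dyadic_sum (sq_avg_dev f c) h u v = dyadic_sum (\<lambda>p q. sq_avg_dev f ?a p q + ?r p q) h u v"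
    by (rule dyadic_sum_cong)
      (auto simp: sq_avg_dev_def Icc_integral_eq_arc_avg power2_eq_square algebra_simps assms(2))
  moreover have "dyadic_sum ?r h u v = ?r u v"
  proof (rule dyadic_sum_additive)
    show "?r p q = ?r p m + ?r m q" if "p \<le> m" "m \<le> q" for p m q
      using Icc_integral_split[OF assms(1) that] by (simp add: algebra_simps)
  qed (use assms(2) in simp)
  moreover have "?r u v = sq_avg_dev f c u v"
    using assms(2) by (simp add: sq_avg_dev_def Icc_integral_eq_arc_avg power2_eq_square algebra_simps)
  ultimately show ?thesis by (simp add: dyadic_sum_add)
qed

lemma loc_integrable_sq_diff:
  assumes "f \<in> borel_measurable borel" "\<And>x. \<bar>f x\<bar> \<le> N"
  shows "loc_integrable (\<lambda>x. (f x - c)\<^sup>2)"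
proof (rule loc_integrable_bounded[where B="(N + \<bar>c\<bar>)\<^sup>2"])
  show "(\<lambda>x. (f x - c)\<^sup>2) \<in> borel_measurable borel" using assms(1) by measurable
  fix x
  have "\<bar>f x - c\<bar> \<le> N + \<bar>c\<bar>" using assms(2)[of x] by linarith
  then have "\<bar>f x - c\<bar>\<^sup>2 \<le> (N + \<bar>c\<bar>)\<^sup>2" by (rule power_mono) simp
  then show "\<bar>(f x - c)\<^sup>2\<bar> \<le> (N + \<bar>c\<bar>)\<^sup>2" by simp
qed

lemma Icc_integral_sq_diff:
  assumes "f \<in> borel_measurable borel" "\<And>x. \<bar>f x\<bar> \<le> N" "u < v"
  shows "Icc_integral (\<lambda>x. (f x - c)\<^sup>2) u v = sq_osc_integral f u v + sq_avg_dev f c u v"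
proof -
  let ?a = "arc_avg f u v"
  have f: "loc_integrable f" using assms(1,2) by (rule loc_integrable_bounded)
  have "(\<lambda>x. (f x - c)\<^sup>2) = (\<lambda>x. (f x - ?a)\<^sup>2 + (2 * (?a - c) * f x + (c\<^sup>2 - ?a\<^sup>2)))"
    by (rule ext) (simp add: power2_eq_square algebra_simps)
  then have "Icc_integral (\<lambda>x. (f x - c)\<^sup>2) u v
      = sq_osc_integral f u v + 2 * (?a - c) * Icc_integral f u v + (c\<^sup>2 - ?a\<^sup>2) * (v - u)"
    using assms(3) loc_integrable_sq_diff[OF assms(1,2)] f
    by (simp add: sq_osc_integral_def Icc_integral_add Icc_integral_cmult Icc_integral_const
        loc_integrable_add loc_integrable_cmult)
  then show ?thesis
    using assms(3) by (simp add: sq_avg_dev_def Icc_integral_eq_arc_avg power2_eq_square algebra_simps)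
qed

lemma Icc_integral_sq_diff_dyadic:
  assumes "f \<in> borel_measurable borel" "\<And>x. \<bar>f x\<bar> \<le> N" "u < v"
  shows "Icc_integral (\<lambda>x. (f x - c)\<^sup>2) u v
    = dyadic_sum (sq_avg_dev f c) h u v + dyadic_sum (sq_osc_integral f) h u v"
proof -
  have "Icc_integral (\<lambda>x. (f x - c)\<^sup>2) u v = dyadic_sum (Icc_integral (\<lambda>x. (f x - c)\<^sup>2)) h u v"
    using dyadic_sum_Icc_integral[OF loc_integrable_sq_diff[OF assms(1,2)]] assms(3) by simp
  also have "\<dots> = dyadic_sum (\<lambda>p q. sq_avg_dev f c p q + sq_osc_integral f p q) h u v"
    by (rule dyadic_sum_cong) (simp_all add: Icc_integral_sq_diff[OF assms(1,2)] assms(3))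
  finally show ?thesis by (simp add: dyadic_sum_add)
qed

lemma sq_osc_integral_le_osc_integral:
  assumes "f \<in> borel_measurable borel" "\<And>x. \<bar>f x\<bar> \<le> N" "u < v"
  shows "sq_osc_integral f u v \<le> 2 * N * osc_integral f u v"
proof -
  have f: "loc_integrable f" using assms(1,2) by (rule loc_integrable_bounded)
  have "-N \<le> f x" "f x \<le> N" for x using assms(2)[of x] by linarith+
  then have "arc_avg f u v \<le> N" "-N \<le> arc_avg f u v"
    by (intro arc_avg_le[OF f assms(3)] arc_avg_ge[OF f assms(3)]; simp)+
  then have avg: "\<bar>arc_avg f u v\<bar> \<le> N" by simp
  have "(f x - arc_avg f u v)\<^sup>2 \<le> (2 * N) * \<bar>f x - arc_avg f u v\<bar>" for x
  proof -
    have "\<bar>f x - arc_avg f u v\<bar> \<le> 2 * N" using assms(2)[of x] avg by linarith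
    then have "\<bar>f x - arc_avg f u v\<bar> * \<bar>f x - arc_avg f u v\<bar> \<le> (2 * N) * \<bar>f x - arc_avg f u v\<bar>"
      by (rule mult_right_mono) simp
    then show ?thesis by (simp add: power2_eq_square)
  qed
  then have "sq_osc_integral f u v \<le> Icc_integral (\<lambda>x. (2 * N) * \<bar>f x - arc_avg f u v\<bar>) u v"
    unfolding sq_osc_integral_def
    by (intro Icc_integral_mono loc_integrable_sq_diff[OF assms(1,2)]) (auto intro: f)
  then show ?thesis by (simp add: osc_integral_def Icc_integral_cmult)
qed

locale bmo_on =
  fixes f :: "real \<Rightarrow> real" and a b s :: real
  assumes integrable: "loc_integrable f" and nonneg: "0 \<le> s"
    and osc_le: "\<And>u v. a \<le> u \<Longrightarrow> u < v \<Longrightarrow> v \<le> b \<Longrightarrow> osc_integral f u v \<le> s * (v - u)"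
begin

text \<open>The stopping-time step of the John--Nirenberg argument: an interval on which \<open>f\<close> drifts
  far from \<open>c\<close> is re-centred at its own average, and the cost of re-centring is paid by the large
  integral of \<open>\<bar>f - c\<bar>\<close> over it.\<close>

lemma dyadic_sum_sq_avg_dev_recentre:
  assumes "p < q" "Icc_integral (\<lambda>x. \<bar>f x - c\<bar>) p q \<le> 4 * s * (q - p)"
    and "2 * s * (q - p) < Icc_integral (\<lambda>x. \<bar>f x - c\<bar>) p q"
    and "dyadic_sum (sq_avg_dev f (arc_avg f p q)) h p q \<le> 24 * s\<^sup>2 * (q - p)"
  shows "dyadic_sum (sq_avg_dev f c) h p q
    \<le> 4 * s\<^sup>2 * (q - p) + 20 * s * Icc_integral (\<lambda>x. \<bar>f x - c\<bar>) p q"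
proof -
  have "sq_avg_dev f c p q \<le> (4 * s)\<^sup>2 * (q - p)"
    by (rule sq_avg_dev_le[OF integrable assms(1,2)])
  moreover have "20 * s * (2 * s * (q - p)) \<le> 20 * s * Icc_integral (\<lambda>x. \<bar>f x - c\<bar>) p q"
    using assms(3) nonneg by (intro mult_left_mono) auto
  ultimately have "dyadic_sum (sq_avg_dev f c) h p q \<le> 20 * s * Icc_integral (\<lambda>x. \<bar>f x - c\<bar>) p q"
    using assms(4) dyadic_sum_sq_avg_dev_shift[OF integrable assms(1), of c h]
    by (simp add: power2_eq_square algebra_simps)
  moreover have "0 \<le> 4 * s\<^sup>2 * (q - p)" using assms(1) by simp
  ultimately show ?thesis by linarith
qed

lemma dyadic_sum_sq_avg_dev_le:
  assumes "a \<le> u" "u < v" "v \<le> b" "Icc_integral (\<lambda>x. \<bar>f x - c\<bar>) u v \<le> 2 * s * (v - u)"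
  shows "dyadic_sum (sq_avg_dev f c) h u v
    \<le> 4 * s\<^sup>2 * (v - u) + 20 * s * Icc_integral (\<lambda>x. \<bar>f x - c\<bar>) u v"
  using assms
proof (induction h arbitrary: u v c)
  case 0
  have "sq_avg_dev f c u v \<le> (2 * s)\<^sup>2 * (v - u)"
    by (rule sq_avg_dev_le[OF integrable]) (use 0 in auto)
  moreover have "0 \<le> 20 * s * Icc_integral (\<lambda>x. \<bar>f x - c\<bar>) u v"
    by (intro mult_nonneg_nonneg Icc_integral_nonneg) (use nonneg in \<open>auto intro: integrable\<close>)
  ultimately show ?case by (simp add: power_mult_distrib)
next
  case (Suc h)
  have half: "dyadic_sum (sq_avg_dev f c) h p q
      \<le> 4 * s\<^sup>2 * (q - p) + 20 * s * Icc_integral (\<lambda>x. \<bar>f x - c\<bar>) p q"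
    if pq: "a \<le> p" "p < q" "q \<le> b" and drift: "Icc_integral (\<lambda>x. \<bar>f x - c\<bar>) p q \<le> 4 * s * (q - p)"
    for p q
  proof (cases "Icc_integral (\<lambda>x. \<bar>f x - c\<bar>) p q \<le> 2 * s * (q - p)")
    case True
    then show ?thesis using Suc.IH pq by blast
  next
    case False
    let ?a = "arc_avg f p q"
    have osc: "Icc_integral (\<lambda>x. \<bar>f x - ?a\<bar>) p q \<le> s * (q - p)"
      using osc_le[OF pq] by (simp add: osc_integral_def)
    moreover have "0 \<le> s * (q - p)" using nonneg pq(2) by simp
    ultimately have "dyadic_sum (sq_avg_dev f ?a) h p q
        \<le> 4 * s\<^sup>2 * (q - p) + 20 * s * Icc_integral (\<lambda>x. \<bar>f x - ?a\<bar>) p q"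
      by (intro Suc.IH pq) simp
    also have "\<dots> \<le> 4 * s\<^sup>2 * (q - p) + 20 * s * (s * (q - p))"
      using osc nonneg by (intro add_left_mono mult_left_mono) auto
    finally have "dyadic_sum (sq_avg_dev f ?a) h p q \<le> 24 * s\<^sup>2 * (q - p)"
      by (simp add: power2_eq_square algebra_simps)
    then show ?thesis using False drift by (intro dyadic_sum_sq_avg_dev_recentre pq(2)) auto
  qed
  let ?m = "(u + v) / 2"
  let ?I = "\<lambda>p q. Icc_integral (\<lambda>x. \<bar>f x - c\<bar>) p q"
  have split: "?I u v = ?I u ?m + ?I ?m v"
    by (rule Icc_integral_split) (use Suc.prems in \<open>auto intro: integrable\<close>)
  have "0 \<le> ?I u ?m" "0 \<le> ?I ?m v"
    by (auto intro!: Icc_integral_nonneg integrable)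
  then have "?I u ?m \<le> 2 * s * (v - u)" "?I ?m v \<le> 2 * s * (v - u)"
    using Suc.prems(4) split by linarith+
  moreover have mid: "?m - u = (v - u) / 2" "v - ?m = (v - u) / 2"
    by (simp_all add: field_simps)
  ultimately have drift: "?I u ?m \<le> 4 * s * (?m - u)" "?I ?m v \<le> 4 * s * (v - ?m)"
    unfolding mid by simp_all
  have "dyadic_sum (sq_avg_dev f c) h u ?m \<le> 4 * s\<^sup>2 * (?m - u) + 20 * s * ?I u ?m"
    by (rule half[OF _ _ _ drift(1)]) (use Suc.prems in auto)
  moreover have "dyadic_sum (sq_avg_dev f c) h ?m v \<le> 4 * s\<^sup>2 * (v - ?m) + 20 * s * ?I ?m v"
    by (rule half[OF _ _ _ drift(2)]) (use Suc.prems in auto)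
  moreover have "4 * s\<^sup>2 * (?m - u) + 4 * s\<^sup>2 * (v - ?m) = 4 * s\<^sup>2 * (v - u)"
    by (simp add: field_simps)
  moreover have "20 * s * ?I u v = 20 * s * ?I u ?m + 20 * s * ?I ?m v"
    by (simp add: split algebra_simps)
  ultimately show ?case unfolding dyadic_sum.simps(2) by linarith
qed

lemma dyadic_sum_sq_avg_dev_avg_le:
  assumes "a \<le> u" "u < v" "v \<le> b"
  shows "dyadic_sum (sq_avg_dev f (arc_avg f u v)) h u v \<le> 24 * s\<^sup>2 * (v - u)"
proof -
  have osc: "Icc_integral (\<lambda>x. \<bar>f x - arc_avg f u v\<bar>) u v \<le> s * (v - u)"
    using osc_le[OF assms] by (simp add: osc_integral_def)
  moreover have "0 \<le> s * (v - u)" using nonneg assms(2) by simp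
  ultimately have "dyadic_sum (sq_avg_dev f (arc_avg f u v)) h u v
      \<le> 4 * s\<^sup>2 * (v - u) + 20 * s * Icc_integral (\<lambda>x. \<bar>f x - arc_avg f u v\<bar>) u v"
    by (intro dyadic_sum_sq_avg_dev_le assms) simp
  also have "\<dots> \<le> 4 * s\<^sup>2 * (v - u) + 20 * s * (s * (v - u))"
    using osc nonneg by (intro add_left_mono mult_left_mono) auto
  finally show ?thesis by (simp add: power2_eq_square algebra_simps)
qed

theorem sq_osc_integral_le:
  assumes "f \<in> borel_measurable borel" "\<And>x. \<bar>f x\<bar> \<le> N" "a < b"
  shows "sq_osc_integral f a b \<le> 24 * s\<^sup>2 * (b - a)"
proof (rule tendsto_lowerbound)
  let ?D = "\<lambda>h. dyadic_sum (osc_integral f) h a b"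
  show "((\<lambda>h. 24 * s\<^sup>2 * (b - a) + 2 * N * ?D h) \<longlongrightarrow> 24 * s\<^sup>2 * (b - a)) sequentially"
    using tendsto_add[OF tendsto_const tendsto_mult_right_zero[OF
          dyadic_osc_vanishes_loc_integrable[OF integrable assms(3), unfolded dyadic_osc_vanishes_def]],
        of "24 * s\<^sup>2 * (b - a)" "2 * N"]
    by simp
  have "sq_osc_integral f a b \<le> 24 * s\<^sup>2 * (b - a) + 2 * N * ?D h" for h
  proof -
    have "sq_osc_integral f a b
        = dyadic_sum (sq_avg_dev f (arc_avg f a b)) h a b + dyadic_sum (sq_osc_integral f) h a b"
      using Icc_integral_sq_diff_dyadic[OF assms] by (simp add: sq_osc_integral_def)
    moreover have "dyadic_sum (sq_osc_integral f) h a b \<le> dyadic_sum (\<lambda>u v. 2 * N * osc_integral f u v) h a b"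
      by (rule dyadic_sum_mono) (auto intro: sq_osc_integral_le_osc_integral[OF assms(1,2)] assms(3))
    ultimately show ?thesis
      using dyadic_sum_sq_avg_dev_avg_le[of a b h] assms(3) by (simp add: dyadic_sum_cmult)
  qed
  then show "\<forall>\<^sub>F h in sequentially. sq_osc_integral f a b \<le> 24 * s\<^sup>2 * (b - a) + 2 * N * ?D h"
    by simp
qed simp

end

section \<open>Truncation\<close>

lemma (in bmo_on) bmo_on_min: "bmo_on (\<lambda>x. min (f x) c) a b (2 * s)"
proof
  show integrable_min: "loc_integrable (\<lambda>x. min (f x) c)"
    using integrable by (rule loc_integrable_min)
  show "0 \<le> 2 * s" using nonneg by simp
  fix u v assume uv: "a \<le> u" "u < v" "v \<le> b"
  have "osc_integral (\<lambda>x. min (f x) c) u v \<le> 2 * osc_integral f u v"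
    by (rule osc_integral_lipschitz_comp_le[OF integrable integrable_min _ uv(2)]) (auto simp: min_def)
  also have "\<dots> \<le> 2 * s * (v - u)" using osc_le[OF uv] by simp
  finally show "osc_integral (\<lambda>x. min (f x) c) u v \<le> 2 * s * (v - u)" .
qed

lemma Icc_integral_min_tendsto:
  assumes "loc_integrable g" "\<And>x. 0 \<le> g x"
  shows "(\<lambda>n. Icc_integral (\<lambda>x. min (g x) (real n)) u v) \<longlonglongrightarrow> Icc_integral g u v"
proof -
  have g: "g \<in> borel_measurable borel" by (rule loc_integrable_borel_measurable[OF assms(1)])
  have trunc: "loc_integrable (\<lambda>x. min (g x) (real n))" for n
    using assms(1) by (rule loc_integrable_min)
  have "(\<lambda>n. Icc_integral (\<lambda>x. g x - min (g x) (real n)) u v) \<longlonglongrightarrow> 0"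
  proof (rule Icc_integral_tendsto_zero[OF _ _ _ assms(1)])
    show "(\<lambda>x. g x - min (g x) (real n)) \<in> borel_measurable borel" for n using g by measurable
    show "(\<lambda>n. g x - min (g x) (real n)) \<longlonglongrightarrow> 0" for x
    proof (rule tendsto_eventually)
      obtain n0 where "g x \<le> real n0" using real_arch_simple by blast
      then show "\<forall>\<^sub>F n in sequentially. g x - min (g x) (real n) = 0"
        unfolding eventually_sequentially by (intro exI[of _ n0]) auto
    qed
    show "\<bar>g x - min (g x) (real n)\<bar> \<le> g x" for n x using assms(2)[of x] by (auto simp: min_def)
  qed
  then have "(\<lambda>n. Icc_integral g u v - (Icc_integral g u v - Icc_integral (\<lambda>x. min (g x) (real n)) u v))
      \<longlonglongrightarrow> Icc_integral g u v - 0"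
    by (intro tendsto_diff tendsto_const) (simp add: Icc_integral_diff[OF assms(1) trunc])
  then show ?thesis by simp
qed

section \<open>Averages of a weight and of its inverse\<close>

lemma arc_avg_mul_le_sq_osc:
  assumes W: "W \<in> borel_measurable borel" "\<And>x. \<bar>W x\<bar> \<le> N"
    and F: "F \<in> borel_measurable borel" "\<And>x. \<bar>F x\<bar> \<le> N"
    and WF: "\<And>x. W x * F x \<le> 1"
    and sqW: "sq_osc_integral W a b \<le> 24 * T\<^sup>2 * (b - a)"
    and sqF: "sq_osc_integral F a b \<le> 24 * S\<^sup>2 * (b - a)"
    and "0 < T" "0 < S" "a < b"
  shows "arc_avg W a b * arc_avg F a b \<le> 1 + 24 * T * S"
proof -
  let ?p = "arc_avg W a b" and ?q = "arc_avg F a b" and ?L = "b - a"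
  define r where "r = S / T"
  have "r > 0" using assms by (simp add: r_def)
  have locW: "loc_integrable W" and locF: "loc_integrable F"
    using W F by (auto intro: loc_integrable_bounded)
  have locWF: "loc_integrable (\<lambda>x. W x * F x)"
  proof (rule loc_integrable_bounded[where B="N * N"])
    show "(\<lambda>x. W x * F x) \<in> borel_measurable borel" using W F by measurable
    show "\<bar>W x * F x\<bar> \<le> N * N" for x using W(2)[of x] F(2)[of x] by (simp add: abs_mult mult_mono')
  qed
  have am_gm: "(W x - ?p) * (?q - F x) \<le> (r / 2) * (W x - ?p)\<^sup>2 + (1 / (2 * r)) * (F x - ?q)\<^sup>2" for x
  proof -
    have "0 \<le> (r * (W x - ?p) - (?q - F x))\<^sup>2 / (2 * r)" using \<open>r > 0\<close> by simp
    then show ?thesis using \<open>r > 0\<close> by (simp add: power2_eq_square field_simps)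
  qed
  have prod_eq: "(\<lambda>x. (W x - ?p) * (?q - F x)) = (\<lambda>x. (?q * W x + ?p * F x) - (W x * F x + ?p * ?q))"
    by (simp add: algebra_simps)
  have "?p * ?q * ?L - Icc_integral (\<lambda>x. W x * F x) a b
      = Icc_integral (\<lambda>x. (W x - ?p) * (?q - F x)) a b"
  proof -
    have "Icc_integral (\<lambda>x. (W x - ?p) * (?q - F x)) a b
        = ?q * Icc_integral W a b + ?p * Icc_integral F a b - (Icc_integral (\<lambda>x. W x * F x) a b + ?p * ?q * ?L)"
      unfolding prod_eq using locW locF locWF \<open>a < b\<close>
      by (simp add: Icc_integral_diff Icc_integral_add Icc_integral_cmult Icc_integral_const
          loc_integrable_add loc_integrable_cmult)
    then show ?thesis
      using Icc_integral_eq_arc_avg[OF \<open>a < b\<close>, of W] Icc_integral_eq_arc_avg[OF \<open>a < b\<close>, of F]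
      by (simp add: algebra_simps)
  qed
  also have "\<dots> \<le> Icc_integral (\<lambda>x. (r / 2) * (W x - ?p)\<^sup>2 + (1 / (2 * r)) * (F x - ?q)\<^sup>2) a b"
  proof (rule Icc_integral_mono)
    show "loc_integrable (\<lambda>x. (W x - ?p) * (?q - F x))"
      unfolding prod_eq using locW locF locWF
      by (intro loc_integrable_diff loc_integrable_add loc_integrable_cmult loc_integrable_const)
    show "loc_integrable (\<lambda>x. (r / 2) * (W x - ?p)\<^sup>2 + (1 / (2 * r)) * (F x - ?q)\<^sup>2)"
      by (intro loc_integrable_add loc_integrable_cmult loc_integrable_sq_diff[OF W] loc_integrable_sq_diff[OF F])
  qed (rule am_gm)
  also have "\<dots> = (r / 2) * sq_osc_integral W a b + (1 / (2 * r)) * sq_osc_integral F a b"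
    unfolding sq_osc_integral_def
    by (simp only: Icc_integral_cmult Icc_integral_add[OF
          loc_integrable_cmult[OF loc_integrable_sq_diff[OF W]] loc_integrable_cmult[OF loc_integrable_sq_diff[OF F]]])
  also have "\<dots> \<le> (r / 2) * (24 * T\<^sup>2 * ?L) + (1 / (2 * r)) * (24 * S\<^sup>2 * ?L)"
    using sqW sqF \<open>r > 0\<close> by (intro add_mono mult_left_mono) auto
  also have "\<dots> = 24 * T * S * ?L"
    using assms by (simp add: r_def power2_eq_square field_simps)
  finally have "?p * ?q * ?L \<le> Icc_integral (\<lambda>x. W x * F x) a b + 24 * T * S * ?L" by simp
  also have "Icc_integral (\<lambda>x. W x * F x) a b \<le> ?L"
    using Icc_integral_mono[OF locWF loc_integrable_const[of 1] WF, of a b] \<open>a < b\<close>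
    by (simp add: Icc_integral_const)
  finally have "?p * ?q * ?L \<le> (1 + 24 * T * S) * ?L" by (simp add: algebra_simps)
  then show ?thesis using \<open>a < b\<close> by simp
qed

lemma arc_avg_mul_le_bmo:
  assumes "bmo_on W a b T" "bmo_on F a b S"
    and W: "W \<in> borel_measurable borel" "\<And>x. \<bar>W x\<bar> \<le> N"
    and F: "F \<in> borel_measurable borel" "\<And>x. \<bar>F x\<bar> \<le> N"
    and WF: "\<And>x. W x * F x \<le> 1" and "a < b"
  shows "arc_avg W a b * arc_avg F a b \<le> 1 + 24 * T * S"
proof (rule tendsto_lowerbound)
  show "((\<lambda>d. 1 + 24 * (T + d) * (S + d)) \<longlongrightarrow> 1 + 24 * T * S) (at_right 0)"
    by (auto intro!: tendsto_eq_intros)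
  have sq_osc: "sq_osc_integral g a b \<le> 24 * (R + d)\<^sup>2 * (b - a)"
    if "bmo_on g a b R" "g \<in> borel_measurable borel" "\<And>x. \<bar>g x\<bar> \<le> N" "0 < d" for g R d
  proof -
    have "sq_osc_integral g a b \<le> 24 * R\<^sup>2 * (b - a)"
      by (rule bmo_on.sq_osc_integral_le[OF that(1-3) \<open>a < b\<close>])
    also have "\<dots> \<le> 24 * (R + d)\<^sup>2 * (b - a)"
      using bmo_on.nonneg[OF that(1)] \<open>0 < d\<close> \<open>a < b\<close> by (auto intro!: mult_right_mono power_mono)
    finally show ?thesis .
  qed
  have "arc_avg W a b * arc_avg F a b \<le> 1 + 24 * (T + d) * (S + d)" if "0 < d" for d
    using bmo_on.nonneg[OF assms(1)] bmo_on.nonneg[OF assms(2)] that \<open>a < b\<close>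
    by (intro arc_avg_mul_le_sq_osc[OF W F WF] sq_osc[OF assms(1) W] sq_osc[OF assms(2) F]) auto
  then show "\<forall>\<^sub>F d in at_right 0. arc_avg W a b * arc_avg F a b \<le> 1 + 24 * (T + d) * (S + d)"
    by (rule eventually_mono[OF eventually_at_right_less])
qed simp

theorem arc_avg_mul_arc_avg_inverse_le:
  fixes w :: "real \<Rightarrow> real"
  assumes "\<And>x. 0 \<le> w x" "bmo_on w a b t" "bmo_on (\<lambda>x. inverse (w x)) a b s" "a < b"
  shows "arc_avg w a b * arc_avg (\<lambda>x. inverse (w x)) a b \<le> 1 + 96 * t * s"
proof (rule tendsto_upperbound)
  let ?f = "\<lambda>x. inverse (w x)"
  have w: "loc_integrable w" and f: "loc_integrable ?f"
    using assms(2,3) by (auto intro: bmo_on.integrable)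
  have f_nonneg: "0 \<le> ?f x" for x using assms(1)[of x] by simp
  have avg_min: "(\<lambda>n. arc_avg (\<lambda>x. min (g x) (real n)) a b) \<longlonglongrightarrow> arc_avg g a b"
    if "loc_integrable g" "\<And>x. 0 \<le> g x" for g
    using tendsto_divide[OF Icc_integral_min_tendsto[OF that] tendsto_const, of "b - a"] \<open>a < b\<close>
    by (simp add: arc_avg_eq)
  show "(\<lambda>n. arc_avg (\<lambda>x. min (w x) (real n)) a b * arc_avg (\<lambda>x. min (?f x) (real n)) a b)
      \<longlonglongrightarrow> arc_avg w a b * arc_avg ?f a b"
    by (intro tendsto_mult avg_min w f assms(1) f_nonneg)
  have "arc_avg (\<lambda>x. min (w x) (real n)) a b * arc_avg (\<lambda>x. min (?f x) (real n)) a b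
      \<le> 1 + 24 * (2 * t) * (2 * s)" for n
  proof (rule arc_avg_mul_le_bmo[where N="real n"])
    show "bmo_on (\<lambda>x. min (w x) (real n)) a b (2 * t)" "bmo_on (\<lambda>x. min (?f x) (real n)) a b (2 * s)"
      using assms(2,3) by (auto intro: bmo_on.bmo_on_min)
    show "(\<lambda>x. min (w x) (real n)) \<in> borel_measurable borel"
      "(\<lambda>x. min (?f x) (real n)) \<in> borel_measurable borel"
      using loc_integrable_borel_measurable[OF w] loc_integrable_borel_measurable[OF f] by measurable
    show "\<bar>min (w x) (real n)\<bar> \<le> real n" "\<bar>min (?f x) (real n)\<bar> \<le> real n" for x
      using assms(1)[of x] f_nonneg[of x] by auto
    show "min (w x) (real n) * min (?f x) (real n) \<le> 1" for x
    proof -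
      have "min (w x) (real n) * min (?f x) (real n) \<le> w x * ?f x"
        using assms(1)[of x] f_nonneg[of x] by (intro mult_mono) auto
      also have "\<dots> \<le> 1" by (cases "w x = 0") simp_all
      finally show ?thesis .
    qed
  qed (rule \<open>a < b\<close>)
  then show "\<forall>\<^sub>F n in sequentially. arc_avg (\<lambda>x. min (w x) (real n)) a b
      * arc_avg (\<lambda>x. min (?f x) (real n)) a b \<le> 1 + 96 * t * s"
    by (simp add: mult.assoc)
qed simp

lemma two_minus_le_inverse: "0 < y \<Longrightarrow> 2 - y \<le> 1 / y" for y :: real
  using sum_squares_ge_zero[of "y - 1" 0] by (simp add: field_simps power2_eq_square)

lemma sq_length_le_Icc_integral_mul_inverse:
  fixes w :: "real \<Rightarrow> real"
  assumes "\<And>x. 0 \<le> w x" "AE x in lborel. w x \<noteq> 0"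
    and w: "loc_integrable w" and f: "loc_integrable (\<lambda>x. inverse (w x))"
    and "0 < Icc_integral w a b" "a < b"
  shows "(b - a)\<^sup>2 \<le> Icc_integral w a b * Icc_integral (\<lambda>x. inverse (w x)) a b"
proof -
  let ?I = "Icc_integral w a b" and ?L = "b - a"
  define k where "k = ?L / ?I"
  have "0 < k" using assms(5,6) by (simp add: k_def)
  have pointwise: "2 - k * w x \<le> (1 / k) * inverse (w x)" if "w x \<noteq> 0" for x
  proof -
    have "0 < w x" using assms(1)[of x] that by simp
    with \<open>0 < k\<close> have "2 - k * w x \<le> 1 / (k * w x)" by (intro two_minus_le_inverse mult_pos_pos)
    then show ?thesis by (simp add: divide_inverse)
  qed
  have "Icc_integral (\<lambda>x. 2 - k * w x) a b \<le> Icc_integral (\<lambda>x. (1 / k) * inverse (w x)) a b"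
    unfolding Icc_integral_def
  proof (rule set_integral_mono_AE)
    have "loc_integrable (\<lambda>x. 2 - k * w x)"
      by (intro loc_integrable_diff loc_integrable_const loc_integrable_cmult w)
    moreover have "loc_integrable (\<lambda>x. (1 / k) * inverse (w x))"
      by (intro loc_integrable_cmult f)
    ultimately show "set_integrable lborel {a..b} (\<lambda>x. 2 - k * w x)"
      "set_integrable lborel {a..b} (\<lambda>x. (1 / k) * inverse (w x))"
      unfolding loc_integrable_def by blast+
    show "AE x\<in>{a..b} in lborel. 2 - k * w x \<le> (1 / k) * inverse (w x)"
      using assms(2) by eventually_elim (use pointwise in blast)
  qed
  moreover have "Icc_integral (\<lambda>x. 2 - k * w x) a b = ?L"
    using assms(5,6) w
    by (simp add: Icc_integral_diff Icc_integral_const Icc_integral_cmult loc_integrable_cmult, simp add: k_def)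
  ultimately have "?L \<le> ?I / ?L * Icc_integral (\<lambda>x. inverse (w x)) a b"
    by (simp only: Icc_integral_cmult, simp add: k_def)
  then show ?thesis using assms(6) by (simp add: power2_eq_square field_simps)
qed

lemma bmo_on_of_bmo_norm:
  assumes "bmo_norm g = ereal t" "b \<le> a + 2 * pi"
  shows "bmo_on g a b t"
proof -
  have integrable: "\<forall>u v. set_integrable lborel {u..v} g"
    using assms(1) by (auto simp: bmo_norm_def split: if_splits)
  have osc: "osc_integral g u v / (v - u) \<le> t" if "u < v" "v \<le> u + 2 * pi" for u v
  proof -
    have "(u, v) \<in> {(a, b). a < b \<and> b \<le> a + 2 * pi}" using that by simp
    then have "ereal ((LBINT x=u..v. \<bar>g x - arc_avg g u v\<bar>) / (v - u)) \<le> bmo_norm g"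
      unfolding bmo_norm_def if_P[OF integrable] by (rule SUP_upper2) simp
    then show ?thesis
      using assms(1) that by (simp add: osc_integral_def Icc_integral_def interval_integral_Icc)
  qed
  show ?thesis
  proof
    show "loc_integrable g" using integrable unfolding loc_integrable_def .
    then show "0 \<le> t" using osc[of 0 1] osc_integral_nonneg[of g 0 1] pi_gt3 by simp
    show "osc_integral g u v \<le> t * (v - u)" if "a \<le> u" "u < v" "v \<le> b" for u v
      using osc[of u v] that assms(2) by (simp add: divide_le_eq)
  qed
qed

lemma L1_norm_T_eq_Icc_integral: "(\<And>x. 0 \<le> g x) \<Longrightarrow> L1_norm_T g = Icc_integral g (-pi) pi"
  by (simp add: L1_norm_T_def Icc_integral_def interval_integral_Icc)

theorem lemma3p3:
  shows "\<exists>C>0. \<forall>(w :: real \<Rightarrow> real) (t :: real) (s :: real).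
     periodic_2pi w \<and> (\<forall>x. w x \<ge> 0) \<and> (AE x in lborel. w x \<noteq> 0) \<and>
     bmo_norm w = ereal t \<and> bmo_norm (\<lambda>x. inverse (w x)) = ereal s \<and>
     set_integrable lborel {-pi..pi} w \<and> L1_norm_T w = 1
     \<longrightarrow> (2 * pi)\<^sup>2 \<le> L1_norm_T (\<lambda>x. inverse (w x)) \<and>
         L1_norm_T (\<lambda>x. inverse (w x)) \<le> C * (1 + (1 + t) * s)"
proof (intro exI[of _ "96 * (2 * pi)\<^sup>2"] conjI allI impI)
  fix w :: "real \<Rightarrow> real" and t s :: real
  let ?f = "\<lambda>x. inverse (w x)"
  assume "periodic_2pi w \<and> (\<forall>x. w x \<ge> 0) \<and> (AE x in lborel. w x \<noteq> 0) \<and>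
     bmo_norm w = ereal t \<and> bmo_norm ?f = ereal s \<and>
     set_integrable lborel {-pi..pi} w \<and> L1_norm_T w = 1"
  then have w: "\<And>x. 0 \<le> w x" "AE x in lborel. w x \<noteq> 0"
    and bmo: "bmo_on w (-pi) pi t" "bmo_on ?f (-pi) pi s" and "L1_norm_T w = 1"
    by (auto intro: bmo_on_of_bmo_norm)
  have "0 \<le> ?f x" for x using w(1)[of x] by simp
  then have L1_f: "L1_norm_T ?f = Icc_integral ?f (-pi) pi" by (rule L1_norm_T_eq_Icc_integral)
  have int_w: "Icc_integral w (-pi) pi = 1"
    using \<open>L1_norm_T w = 1\<close> by (simp add: L1_norm_T_eq_Icc_integral w(1))
  show "(2 * pi)\<^sup>2 \<le> L1_norm_T ?f"
    using sq_length_le_Icc_integral_mul_inverse[OF w bmo_on.integrable[OF bmo(1)]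
        bmo_on.integrable[OF bmo(2)], of "-pi" pi] int_w
    by (simp add: L1_f)
  have "L1_norm_T ?f \<le> (2 * pi)\<^sup>2 * (1 + 96 * t * s)"
    using arc_avg_mul_arc_avg_inverse_le[OF w(1) bmo] int_w unfolding L1_f
    by (simp add: arc_avg_eq power2_eq_square field_simps)
  also have "\<dots> \<le> 96 * (2 * pi)\<^sup>2 * (1 + (1 + t) * s)"
    using bmo_on.nonneg[OF bmo(1)] bmo_on.nonneg[OF bmo(2)] by (simp add: algebra_simps)
  finally show "L1_norm_T ?f \<le> 96 * (2 * pi)\<^sup>2 * (1 + (1 + t) * s)" .
qed simp

end
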